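(* Let $m\ge 1$, $x_0=(x_{0,1},\dots,x_{0,m})\in\mathbb{R}^m$, let $f\in C([0,+\infty[\times\mathbb{R}^{2m},\mathbb{R}^m)$ be locally Lipschitz with respect to the second variable, and let $g_1,\dots,g_m\in C(\mathbb{R})$ be locally Lipschitz on $\mathbb{R}$. Fix $\alpha>0$ and $T>0$, put $I_i:=[x_{0,i}-\alpha,x_{0,i}+\alpha]$ for $i=1,\dots,m$, $Q:=\prod_{i=1}^m I_i$ and $G:=\prod_{i=1}^m g_i(I_i)$, and set \[ M_{\alpha,T}:=\max\{\|f(t,u,v)\| : t\in[0,T],\ u\in Q,\ v\in G\}, \] assuming $M_{\alpha,T}>0$. Let $L_{\alpha,T}>0$ and $L_\alpha>0$ be such that for every $t\in[0,T]$, $u_1,u_2\in Q$, $v_1,v_2\in G$, \[ \|f(t,u_1,v_1)-f(t,u_2,v_2)\|\le L_{\alpha,T}\big(\|u_1-u_2\|+\|v_1-v_2\|\big), \] and for every $i=1,\dots,m$ and all $x,y\in I_i$, $|g_i(x)-g_i(y)|\le L_\alpha|x-y|$. Then for every \[ 0<\overline T<\min\Big\{\frac{\alpha}{M_{\alpha,T}},\ \frac{1}{L_{\alpha,T}(1+L_\alpha\sqrt m)},\ T\Big\} \] there exists $x=(x_1,\dots,x_m)\in C^1([0,\overline T];\mathbb{R}^m)$ solving \[ \dot x(t)=f\Big(t,x(t),\max_{s\in[0,t]}g_1(x_1(s)),\dots,\max_{s\in[0,t]}g_m(x_m(s))\Big),\quad t\in[0,\overline T],\qquad x(0)=x_0.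 \]
   Context: $\|\cdot\|$ denotes the Euclidean norm on $\mathbb{R}^m$. The function $f$ is evaluated as $f(t,u,v)$ with $t\ge0$, $u\in\mathbb{R}^m$, $v\in\mathbb{R}^m$. *)

theory Defs
  imports "HOL-Analysis.Analysis"
begin

definition locally_lipschitz_on :: "real set \<Rightarrow> (real \<Rightarrow> real) \<Rightarrow> bool" where
  "locally_lipschitz_on S h \<longleftrightarrow>
     (\<forall>x\<in>S. \<exists>e>0. \<exists>L. L-lipschitz_on (cball x e \<inter> S) h)"

end

theory Submission
  imports Defs
begin

(* The solution is a fixed point of the Picard operator
     P x t = x0 + integral_0^t f (s, x s, max_{r in [0,s]} g (x r)).
   On the M-Lipschitz functions with x 0 = x0 (M bounding f on the box) the constraint
   Tb <= alpha / M keeps x in Q, so the running maxima of g_i (x_i) are attained, hence lie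
   in G, and are again Lipschitz; thus P preserves this class. Taking running maxima is
   1-Lipschitz for the sup norm, so the Lipschitz bounds on f and g make P a contraction with
   constant Tb LT (1 + La sqrt m) < 1, and Banach's fixed point theorem applies. *)

lemma cSUP_le_cSUP_add:
  fixes a b :: "'i \<Rightarrow> real"
  assumes "A \<noteq> {}" "bdd_above (b ` B)" "\<And>r. r \<in> A \<Longrightarrow> \<exists>r'\<in>B. a r \<le> b r' + c"
  shows "Sup (a ` A) \<le> Sup (b ` B) + c"
proof (rule cSUP_least[OF assms(1)])
  fix r assume "r \<in> A"
  then obtain r' where "r' \<in> B" "a r \<le> b r' + c" using assms(3) by blast
  moreover have "b r' \<le> Sup (b ` B)" using cSUP_upper[OF \<open>r' \<in> B\<close> assms(2)] .
  ultimately show "a r \<le> Sup (b ` B) + c" by linarith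
qed

lemma bdd_above_image_Icc_continuous:
  fixes h :: "real \<Rightarrow> real"
  assumes "continuous_on {a..b} h"
  shows "bdd_above (h ` {a..b})"
  using assms
  by (meson bounded_imp_bdd_above compact_Icc compact_continuous_image compact_imp_bounded)

definition running_max :: "(real \<Rightarrow> real) \<Rightarrow> real \<Rightarrow> real" where
  "running_max h t = Sup (h ` {0..t})"

lemma running_max_attained:
  assumes "continuous_on {0..t} h" "0 \<le> t"
  shows "\<exists>r\<in>{0..t}. running_max h t = h r"
proof -
  obtain r where "r \<in> {0..t}" "\<And>y. y \<in> {0..t} \<Longrightarrow> h y \<le> h r"
    using continuous_attains_sup[OF compact_Icc _ assms(1)] assms(2) by auto
  then show ?thesis
    unfolding running_max_def by (intro bexI[of _ r] cSup_eq_maximum) auto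
qed

lemma abs_running_max_diff_le:
  assumes "continuous_on {0..t} h1" "continuous_on {0..t} h2" "0 \<le> t"
    and "\<And>r. r \<in> {0..t} \<Longrightarrow> \<bar>h1 r - h2 r\<bar> \<le> d"
  shows "\<bar>running_max h1 t - running_max h2 t\<bar> \<le> d"
proof -
  have "running_max h1 t \<le> running_max h2 t + d" "running_max h2 t \<le> running_max h1 t + d"
    unfolding running_max_def using assms
    by (intro cSUP_le_cSUP_add bdd_above_image_Icc_continuous; force simp: abs_le_iff)+
  then show ?thesis by linarith
qed

lemma lipschitz_on_running_max:
  assumes "L-lipschitz_on {0..} h"
  shows "L-lipschitz_on {0..} (running_max h)"
proof (rule lipschitz_onI)
  have bdd: "bdd_above (h ` {0..t})" for t
    by (intro bdd_above_image_Icc_continuous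
        continuous_on_subset[OF lipschitz_on_continuous_on[OF assms]]) auto
  have mono_shift: "\<bar>running_max h t - running_max h s\<bar> \<le> L * (t - s)" if "0 \<le> s" "s \<le> t" for s t
  proof -
    have "running_max h s \<le> running_max h t + 0"
      unfolding running_max_def using that by (intro cSUP_le_cSUP_add bdd) auto
    moreover have "running_max h t \<le> running_max h s + L * (t - s)"
      unfolding running_max_def
    proof (intro cSUP_le_cSUP_add bdd)
      fix r assume r: "r \<in> {0..t}"
      have "h r \<le> h (min r s) + L * dist r (min r s)"
        using lipschitz_onD[OF assms, of r "min r s"] r that by (auto simp: dist_real_def)
      also have "\<dots> \<le> h (min r s) + L * (t - s)"
        using r that lipschitz_on_nonneg[OF assms]
        by (intro add_left_mono mult_left_mono) (auto simp: dist_real_def)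
      finally show "\<exists>r'\<in>{0..s}. h r \<le> h r' + L * (t - s)"
        using r that by (intro bexI[of _ "min r s"]) auto
    qed (use that in auto)
    ultimately show ?thesis by linarith
  qed
  fix s t :: real assume "s \<in> {0..}" "t \<in> {0..}"
  then show "dist (running_max h s) (running_max h t) \<le> L * dist s t"
    using mono_shift[of s t] mono_shift[of t s]
    by (cases "s \<le> t") (auto simp: dist_real_def abs_minus_commute)
qed (rule lipschitz_on_nonneg[OF assms])

lemma norm_le_sqrt_card_cart:
  fixes x :: "real^'n"
  assumes "\<And>i. \<bar>x $ i\<bar> \<le> c"
  shows "norm x \<le> sqrt CARD('n) * c"
proof -
  have "infnorm x \<le> c"
    unfolding infnorm_cart using assms by (auto intro!: cSup_least)
  then show ?thesis
    using norm_le_infnorm[of x] by (simp add: order_trans mult_left_mono)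
qed

lemma bounded_cart_componentwise:
  fixes S :: "'n::finite \<Rightarrow> real set"
  assumes "\<And>i. bounded (S i)"
  shows "bounded {v :: real^'n. \<forall>i. v $ i \<in> S i}"
proof -
  have "\<forall>i. \<exists>b. \<forall>x\<in>S i. \<bar>x\<bar> \<le> b"
    using assms bounded_real by blast
  then obtain B where B: "\<And>i x. x \<in> S i \<Longrightarrow> \<bar>x\<bar> \<le> B i"
    by metis
  have "norm v \<le> (\<Sum>i\<in>UNIV. B i)" if "\<forall>i. v $ i \<in> S i" for v
    using norm_le_l1_cart[of v] sum_mono[of UNIV "\<lambda>i. \<bar>v $ i\<bar>" B] B that by force
  then show ?thesis by (auto simp: bounded_iff)
qed

lemma norm_le_Sup_norm_image:
  fixes h :: "'a::heine_borel \<Rightarrow> 'b::real_normed_vector"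
  assumes "continuous_on (closure A) h" "bounded A" "a \<in> A"
  shows "norm (h a) \<le> Sup (norm ` h ` A)"
proof -
  have "bounded (h ` A)"
    using compact_continuous_image[OF assms(1)] assms(2)
    by (meson bounded_subset closure_subset compact_closure compact_imp_bounded image_mono)
  then show ?thesis
    using assms(3)
    by (intro cSup_upper bounded_imp_bdd_above) (auto simp: image_image bounded_norm_comp)
qed

lemma bcontfun_fixpoint:
  fixes P :: "('a::metric_space \<Rightarrow> 'b::complete_space) \<Rightarrow> 'a \<Rightarrow> 'b"
  assumes closed: "closed {\<phi>. D (apply_bcontfun \<phi>)}"
    and nonempty: "D \<phi>\<^sub>0"
    and bcontfun: "\<And>\<phi>. D \<phi> \<Longrightarrow> \<phi> \<in> bcontfun"
    and invariant: "\<And>\<phi>. D \<phi> \<Longrightarrow> D (P \<phi>)"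
    and contraction: "\<And>\<phi> \<psi> d x. D \<phi> \<Longrightarrow> D \<psi> \<Longrightarrow> (\<And>y. dist (\<phi> y) (\<psi> y) \<le> d) \<Longrightarrow>
                        dist (P \<phi> x) (P \<psi> x) \<le> c * d"
    and c: "0 \<le> c" "c < 1"
  shows "\<exists>\<phi>. D \<phi> \<and> P \<phi> = \<phi>"
proof -
  define S where "S = {\<phi>. D (apply_bcontfun \<phi>)}"
  define \<Phi> where "\<Phi> \<phi> = Bcontfun (P (apply_bcontfun \<phi>))" for \<phi>
  have \<Phi>_apply: "apply_bcontfun (\<Phi> \<phi>) = P (apply_bcontfun \<phi>)" if "\<phi> \<in> S" for \<phi>
    using that by (simp add: \<Phi>_def S_def Bcontfun_inverse bcontfun invariant)
  have "complete S"
    using closed by (simp add: S_def complete_eq_closed)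
  moreover have "Bcontfun \<phi>\<^sub>0 \<in> S"
    using nonempty by (simp add: S_def Bcontfun_inverse bcontfun)
  moreover have "\<Phi> ` S \<subseteq> S"
    using \<Phi>_apply invariant by (auto simp: S_def)
  moreover have "dist (\<Phi> \<phi>) (\<Phi> \<psi>) \<le> c * dist \<phi> \<psi>" if "\<phi> \<in> S" "\<psi> \<in> S" for \<phi> \<psi>
    using that by (intro dist_bound) (auto simp: \<Phi>_apply S_def intro!: contraction dist_bounded)
  ultimately obtain \<phi> where "\<phi> \<in> S" "\<Phi> \<phi> = \<phi>"
    using Banach_fix[OF _ _ c, of S \<Phi>] by blast
  then show ?thesis
    using \<Phi>_apply[of \<phi>] by (intro exI[of _ "apply_bcontfun \<phi>"]) (simp add: S_def)
qed

locale running_max_ivp =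
  fixes f :: "real \<Rightarrow> real^'m \<Rightarrow> real^'m \<Rightarrow> real^'m"
    and g :: "'m \<Rightarrow> real \<Rightarrow> real"
    and x0 :: "real^'m"
    and \<alpha> M LT La Tb :: real
    and I :: "'m \<Rightarrow> real set"
    and Q G :: "(real^'m) set"
  assumes I_def: "\<And>i. I i = {x0 $ i - \<alpha> .. x0 $ i + \<alpha>}"
    and Q_def: "Q = {u. \<forall>i. u $ i \<in> I i}"
    and G_def: "G = {v. \<forall>i. v $ i \<in> g i ` I i}"
    and f_cont: "continuous_on ({0..Tb} \<times> Q \<times> G) (\<lambda>(t, u, v). f t u v)"
    and f_bound: "\<And>t u v. t \<in> {0..Tb} \<Longrightarrow> u \<in> Q \<Longrightarrow> v \<in> G \<Longrightarrow> norm (f t u v) \<le> M"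
    and f_lip: "\<And>t u1 u2 v1 v2. t \<in> {0..Tb} \<Longrightarrow> u1 \<in> Q \<Longrightarrow> u2 \<in> Q \<Longrightarrow>
                 v1 \<in> G \<Longrightarrow> v2 \<in> G \<Longrightarrow>
                 norm (f t u1 v1 - f t u2 v2) \<le> LT * (norm (u1 - u2) + norm (v1 - v2))"
    and g_lip: "\<And>i x y. x \<in> I i \<Longrightarrow> y \<in> I i \<Longrightarrow> \<bar>g i x - g i y\<bar> \<le> La * \<bar>x - y\<bar>"
    and M_nonneg: "0 \<le> M" and LT_nonneg: "0 \<le> LT" and La_nonneg: "0 \<le> La"
    and Tb_pos: "0 < Tb"
    and Tb_reach: "M * Tb \<le> \<alpha>"
    and Tb_contraction: "Tb * (LT * (1 + La * sqrt CARD('m))) < 1"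
begin

(* Candidates are frozen outside [0, Tb] by clamping, so that they are bounded continuous
   functions on the whole real line, where Banach's theorem is available. *)
definition admissible :: "(real \<Rightarrow> real^'m) \<Rightarrow> bool" where
  "admissible \<phi> \<longleftrightarrow>
     \<phi> 0 = x0 \<and> (\<forall>s t. dist (\<phi> s) (\<phi> t) \<le> M * dist (clamp 0 Tb s) (clamp 0 Tb t))"

definition running_maxima :: "(real \<Rightarrow> real^'m) \<Rightarrow> real \<Rightarrow> real^'m" where
  "running_maxima \<phi> s = (\<chi> i. running_max (\<lambda>r. g i (\<phi> r $ i)) s)"

definition rhs :: "(real \<Rightarrow> real^'m) \<Rightarrow> real \<Rightarrow> real^'m" where
  "rhs \<phi> s = f s (\<phi> s) (running_maxima \<phi> s)"

definition picard :: "(real \<Rightarrow> real^'m) \<Rightarrow> real \<Rightarrow> real^'m" where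
  "picard \<phi> t = x0 + integral {0..clamp 0 Tb t} (rhs \<phi>)"

lemma clamp_mem: "clamp 0 Tb t \<in> {0..Tb}"
  using clamp_in_interval[of 0 Tb t] Tb_pos by simp

lemma dist_clamp_le: "dist (clamp 0 Tb s) (clamp 0 Tb t) \<le> dist s t"
  using dist_clamps_le_dist_args[of 0 Tb s t] Tb_pos by simp

lemma admissible_lipschitz: "admissible \<phi> \<Longrightarrow> M-lipschitz_on UNIV \<phi>"
  unfolding admissible_def
  by (intro lipschitz_onI M_nonneg) (meson dist_clamp_le M_nonneg mult_left_mono order_trans)

lemma admissible_dist_x0:
  assumes "admissible \<phi>"
  shows "dist (\<phi> s) x0 \<le> \<alpha>"
proof -
  have "dist (\<phi> s) x0 \<le> M * dist (clamp 0 Tb s) (clamp 0 Tb 0)"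
    using assms unfolding admissible_def by metis
  also have "\<dots> \<le> M * Tb"
    using clamp_mem[of s] clamp_mem[of 0] M_nonneg
    by (intro mult_left_mono) (auto simp: dist_real_def)
  finally show ?thesis
    using Tb_reach by simp
qed

lemma admissible_mem_Q:
  assumes "admissible \<phi>"
  shows "\<phi> s \<in> Q"
proof -
  have "\<phi> s $ i \<in> I i" for i
    using admissible_dist_x0[OF assms, of s] norm_bound_component_le_cart[of "\<phi> s - x0" \<alpha> i]
    by (auto simp: I_def dist_norm abs_le_iff)
  then show ?thesis
    by (simp add: Q_def)
qed

lemma lipschitz_on_admissible_component:
  assumes "admissible \<phi>"
  shows "(La * M)-lipschitz_on UNIV (\<lambda>r. g i (\<phi> r $ i))"
proof (intro lipschitz_onI)
  fix r s :: real
  have "dist (g i (\<phi> r $ i)) (g i (\<phi> s $ i)) \<le> La * \<bar>\<phi> r $ i - \<phi> s $ i\<bar>"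
    using admissible_mem_Q[OF assms] by (auto simp: dist_real_def Q_def intro: g_lip)
  also have "\<dots> \<le> La * dist (\<phi> r) (\<phi> s)"
    using La_nonneg
    by (intro mult_left_mono)
      (auto simp: dist_norm simp flip: vector_minus_component intro: component_le_norm_cart)
  also have "\<dots> \<le> La * (M * dist r s)"
    using La_nonneg lipschitz_onD[OF admissible_lipschitz[OF assms]] by (intro mult_left_mono) auto
  finally show "dist (g i (\<phi> r $ i)) (g i (\<phi> s $ i)) \<le> La * M * dist r s"
    by (simp add: mult.assoc)
qed (use La_nonneg M_nonneg in simp)

lemma continuous_on_admissible_component:
  "admissible \<phi> \<Longrightarrow> continuous_on S (\<lambda>r. g i (\<phi> r $ i))"
  using lipschitz_on_continuous_on[OF lipschitz_on_admissible_component] continuous_on_subset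
  by blast

lemma running_maxima_mem_G:
  assumes "admissible \<phi>" "0 \<le> s"
  shows "running_maxima \<phi> s \<in> G"
proof -
  have "running_maxima \<phi> s $ i \<in> g i ` I i" for i
  proof -
    obtain r where "running_max (\<lambda>r. g i (\<phi> r $ i)) s = g i (\<phi> r $ i)"
      using running_max_attained[OF continuous_on_admissible_component[OF assms(1)] assms(2)]
      by blast
    then show ?thesis
      using admissible_mem_Q[OF assms(1), of r] by (simp add: running_maxima_def Q_def)
  qed
  then show ?thesis by (simp add: G_def)
qed

lemma continuous_on_running_maxima:
  assumes "admissible \<phi>"
  shows "continuous_on {0..} (running_maxima \<phi>)"
  unfolding running_maxima_def
  using lipschitz_on_admissible_component[OF assms]
  by (intro continuous_on_vec_lambda lipschitz_on_continuous_on lipschitz_on_running_max)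
    (auto intro: lipschitz_on_subset)

lemma continuous_on_rhs:
  assumes "admissible \<phi>"
  shows "continuous_on {0..Tb} (rhs \<phi>)"
proof -
  have "continuous_on {0..Tb} (\<lambda>s. (s, \<phi> s, running_maxima \<phi> s))"
    using assms by (intro continuous_intros continuous_on_subset[OF continuous_on_running_maxima]
        continuous_on_subset[OF lipschitz_on_continuous_on[OF admissible_lipschitz]]) auto
  moreover have "(\<lambda>s. (s, \<phi> s, running_maxima \<phi> s)) ` {0..Tb} \<subseteq> {0..Tb} \<times> Q \<times> G"
    using assms by (auto intro: admissible_mem_Q running_maxima_mem_G)
  ultimately show ?thesis
    using continuous_on_compose2[OF f_cont] by (fastforce simp: rhs_def)
qed

lemma norm_rhs_le: "admissible \<phi> \<Longrightarrow> s \<in> {0..Tb} \<Longrightarrow> norm (rhs \<phi> s) \<le> M"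
  unfolding rhs_def by (auto intro: f_bound admissible_mem_Q running_maxima_mem_G)

lemma norm_integral_rhs_diff_le:
  assumes "admissible \<phi>" "0 \<le> a" "a \<le> b" "b \<le> Tb"
  shows "norm (integral {0..b} (rhs \<phi>) - integral {0..a} (rhs \<phi>)) \<le> M * (b - a)"
proof -
  have "integral {0..a} (rhs \<phi>) + integral {a..b} (rhs \<phi>) = integral {0..b} (rhs \<phi>)"
    using assms by (intro Henstock_Kurzweil_Integration.integral_combine integrable_continuous_real
        continuous_on_subset[OF continuous_on_rhs]) auto
  moreover have "norm (integral {a..b} (rhs \<phi>)) \<le> M * (b - a)"
    using assms
    by (intro integral_bound continuous_on_subset[OF continuous_on_rhs] norm_rhs_le) auto
  ultimately show ?thesis
    by (metis add_diff_cancel_left')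
qed

lemma admissible_picard:
  assumes "admissible \<phi>"
  shows "admissible (picard \<phi>)"
  unfolding admissible_def
proof (intro conjI allI)
  show "picard \<phi> 0 = x0"
    using Tb_pos by (simp add: picard_def)
  fix s t
  show "dist (picard \<phi> s) (picard \<phi> t) \<le> M * dist (clamp 0 Tb s) (clamp 0 Tb t)"
    using norm_integral_rhs_diff_le[OF assms, of "clamp 0 Tb s" "clamp 0 Tb t"]
      norm_integral_rhs_diff_le[OF assms, of "clamp 0 Tb t" "clamp 0 Tb s"]
      clamp_mem[of s] clamp_mem[of t]
    by (cases "clamp 0 Tb s \<le> clamp 0 Tb t")
      (auto simp: picard_def dist_norm dist_real_def norm_minus_commute)
qed

lemma norm_running_maxima_diff_le:
  assumes "admissible \<phi>" "admissible \<psi>" "\<And>r. dist (\<phi> r) (\<psi> r) \<le> d" "0 \<le> s"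
  shows "norm (running_maxima \<phi> s - running_maxima \<psi> s) \<le> sqrt CARD('m) * (La * d)"
proof (rule norm_le_sqrt_card_cart)
  fix i
  have "\<bar>g i (\<phi> r $ i) - g i (\<psi> r $ i)\<bar> \<le> La * d" for r
  proof -
    have "\<bar>g i (\<phi> r $ i) - g i (\<psi> r $ i)\<bar> \<le> La * \<bar>\<phi> r $ i - \<psi> r $ i\<bar>"
      using admissible_mem_Q[OF assms(1)] admissible_mem_Q[OF assms(2)]
      by (intro g_lip) (auto simp: Q_def)
    also have "\<dots> \<le> La * d"
      using La_nonneg assms(3)[of r]
      by (intro mult_left_mono) (auto simp: dist_norm simp flip: vector_minus_component
          intro: norm_bound_component_le_cart)
    finally show ?thesis .
  qed
  then show "\<bar>(running_maxima \<phi> s - running_maxima \<psi> s) $ i\<bar> \<le> La * d"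
    using abs_running_max_diff_le[OF continuous_on_admissible_component[OF assms(1)]
        continuous_on_admissible_component[OF assms(2)] assms(4)]
    by (simp add: running_maxima_def)
qed

lemma dist_picard_le:
  assumes "admissible \<phi>" "admissible \<psi>" "\<And>r. dist (\<phi> r) (\<psi> r) \<le> d"
  shows "dist (picard \<phi> t) (picard \<psi> t) \<le> Tb * (LT * (1 + La * sqrt CARD('m))) * d"
proof -
  let ?K = "LT * (1 + La * sqrt CARD('m))"
  have d_nonneg: "0 \<le> d"
    using assms(3)[of 0] zero_le_dist order_trans by blast
  have "norm (rhs \<phi> s - rhs \<psi> s) \<le> ?K * d" if "s \<in> {0..Tb}" for s
  proof -
    have "norm (rhs \<phi> s - rhs \<psi> s) \<le>
        LT * (norm (\<phi> s - \<psi> s) + norm (running_maxima \<phi> s - running_maxima \<psi> s))"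
      unfolding rhs_def using that assms by (intro f_lip admissible_mem_Q running_maxima_mem_G) auto
    also have "\<dots> \<le> LT * (d + sqrt CARD('m) * (La * d))"
      using that assms LT_nonneg
      by (intro mult_left_mono add_mono norm_running_maxima_diff_le) (auto simp flip: dist_norm)
    finally show ?thesis
      by (simp add: algebra_simps)
  qed
  then have "norm (integral {0..clamp 0 Tb t} (\<lambda>s. rhs \<phi> s - rhs \<psi> s)) \<le>
      ?K * d * (clamp 0 Tb t - 0)"
    using assms clamp_mem[of t]
    by (intro integral_bound continuous_intros continuous_on_subset[OF continuous_on_rhs]) auto
  also have "\<dots> \<le> ?K * d * Tb"
    using clamp_mem[of t] LT_nonneg La_nonneg d_nonneg by (intro mult_left_mono) auto
  finally show ?thesis
    using assms clamp_mem[of t]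
    by (simp add: picard_def dist_norm integral_diff integrable_continuous_real
        continuous_on_subset[OF continuous_on_rhs] mult_ac)
qed

lemma closed_admissible: "closed {\<phi> :: real \<Rightarrow>\<^sub>C (real^'m). admissible (apply_bcontfun \<phi>)}"
proof -
  have "1-lipschitz_on UNIV (\<lambda>\<phi> :: real \<Rightarrow>\<^sub>C (real^'m). apply_bcontfun \<phi> s)" for s
    by (intro lipschitz_onI) (simp_all add: dist_bounded)
  then have continuous_eval:
      "continuous_on UNIV (\<lambda>\<phi> :: real \<Rightarrow>\<^sub>C (real^'m). apply_bcontfun \<phi> s)" for s
    by (rule lipschitz_on_continuous_on)
  have "{\<phi>. admissible (apply_bcontfun \<phi>)} = {\<phi>. apply_bcontfun \<phi> 0 = x0} \<inter>
      (\<Inter>s. \<Inter>t. {\<phi>. dist (apply_bcontfun \<phi> s) (apply_bcontfun \<phi> t) \<le>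
         M * dist (clamp 0 Tb s) (clamp 0 Tb t)})"
    by (auto simp: admissible_def)
  also have "closed \<dots>"
    by (intro closed_Int closed_INT ballI closed_Collect_eq closed_Collect_le continuous_intros
        continuous_on_dist continuous_eval)
  finally show ?thesis .
qed

lemma admissible_bcontfun:
  assumes "admissible \<phi>"
  shows "\<phi> \<in> bcontfun"
proof (rule bcontfun_normI)
  show "continuous_on UNIV \<phi>"
    using lipschitz_on_continuous_on[OF admissible_lipschitz[OF assms]] .
  show "norm (\<phi> t) \<le> norm x0 + \<alpha>" for t
    using admissible_dist_x0[OF assms, of t] norm_triangle_sub[of "\<phi> t" x0]
    by (simp add: dist_norm)
qed

lemma admissible_picard_fixpoint: "\<exists>\<phi>. admissible \<phi> \<and> picard \<phi> = \<phi>"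
proof (rule bcontfun_fixpoint[OF closed_admissible])
  show "admissible (\<lambda>_. x0)"
    using M_nonneg by (simp add: admissible_def)
qed (use Tb_contraction Tb_pos LT_nonneg La_nonneg in
      \<open>auto intro: admissible_bcontfun admissible_picard dist_picard_le\<close>)

lemma solution_exists:
  "\<exists>x x' :: real \<Rightarrow> real^'m.
     continuous_on {0..Tb} x' \<and> x 0 = x0 \<and>
     (\<forall>t\<in>{0..Tb}. (x has_vector_derivative x' t) (at t within {0..Tb}) \<and>
        x' t = f t (x t) (\<chi> i. running_max (\<lambda>s. g i (x s $ i)) t))"
proof -
  obtain x where x: "admissible x" "picard x = x"
    using admissible_picard_fixpoint by blast
  have "(x has_vector_derivative rhs x t) (at t within {0..Tb})" if t: "t \<in> {0..Tb}" for t
  proof (rule has_vector_derivative_transform[OF t])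
    show "x u = x0 + integral {0..u} (rhs x)" if "u \<in> {0..Tb}" for u
      using that fun_cong[OF x(2), of u] by (simp add: picard_def)
    show "((\<lambda>u. x0 + integral {0..u} (rhs x)) has_vector_derivative rhs x t) (at t within {0..Tb})"
      using has_vector_derivative_add[OF has_vector_derivative_const
          integral_has_vector_derivative[OF continuous_on_rhs[OF x(1)] t]] by simp
  qed
  moreover have "x 0 = x0"
    using x(1) by (simp add: admissible_def)
  ultimately show ?thesis
    using continuous_on_rhs[OF x(1)] unfolding rhs_def running_maxima_def by blast
qed

end

theorem mainTheorem1:
  fixes f :: "real \<Rightarrow> real^'m \<Rightarrow> real^'m \<Rightarrow> real^'m"
    and g :: "'m \<Rightarrow> real \<Rightarrow> real"
    and x0 :: "real^'m"
    and \<alpha> T M LT La Tb :: real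
    and I :: "'m \<Rightarrow> real set"
    and Q G :: "(real^'m) set"
  assumes f_cont: "continuous_on ({0..} \<times> UNIV \<times> UNIV) (\<lambda>(t, u, v). f t u v)"
    and f_loc_lip: "local_lipschitz {0..} UNIV (\<lambda>t (u, v). f t u v)"
    and g_cont: "\<And>i. continuous_on UNIV (g i)"
    and g_loc_lip: "\<And>i. locally_lipschitz_on UNIV (g i)"
    and \<alpha>_pos: "\<alpha> > 0" and T_pos: "T > 0"
    and I_def: "\<And>i. I i = {x0 $ i - \<alpha> .. x0 $ i + \<alpha>}"
    and Q_def: "Q = {u. \<forall>i. u $ i \<in> I i}"
    and G_def: "G = {v. \<forall>i. v $ i \<in> g i ` I i}"
    and M_def: "M = Sup {norm (f t u v) | t u v. t \<in> {0..T} \<and> u \<in> Q \<and> v \<in> G}"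
    and M_pos: "M > 0"
    and LT_pos: "LT > 0" and La_pos: "La > 0"
    and f_lip: "\<And>t u1 u2 v1 v2. t \<in> {0..T} \<Longrightarrow> u1 \<in> Q \<Longrightarrow> u2 \<in> Q \<Longrightarrow>
                 v1 \<in> G \<Longrightarrow> v2 \<in> G \<Longrightarrow>
                 norm (f t u1 v1 - f t u2 v2) \<le> LT * (norm (u1 - u2) + norm (v1 - v2))"
    and g_lip: "\<And>i x y. x \<in> I i \<Longrightarrow> y \<in> I i \<Longrightarrow> \<bar>g i x - g i y\<bar> \<le> La * \<bar>x - y\<bar>"
    and Tb_pos: "0 < Tb"
    and Tb_bound: "Tb < Min {\<alpha> / M, 1 / (LT * (1 + La * sqrt (real CARD('m)))), T}"
  shows "\<exists>x x' :: real \<Rightarrow> real^'m.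
           continuous_on {0..Tb} x' \<and>
           x 0 = x0 \<and>
           (\<forall>t\<in>{0..Tb}. (x has_vector_derivative x' t) (at t within {0..Tb}) \<and>
              x' t = f t (x t) (\<chi> i. Sup ((\<lambda>s. g i (x s $ i)) ` {0..t})))"
proof -
  have "bounded Q"
    unfolding Q_def by (rule bounded_cart_componentwise) (simp add: I_def)
  moreover have "bounded G"
    unfolding G_def by (rule bounded_cart_componentwise)
      (auto simp: I_def
        intro: compact_imp_bounded compact_continuous_image continuous_on_subset[OF g_cont])
  moreover have "closure ({0..T} \<times> Q \<times> G) \<subseteq> {0..} \<times> UNIV \<times> UNIV"
    by (intro closure_minimal closed_Times) auto
  moreover have "{norm (f t u v) | t u v. t \<in> {0..T} \<and> u \<in> Q \<and> v \<in> G} =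
      norm ` (\<lambda>(t, u, v). f t u v) ` ({0..T} \<times> Q \<times> G)"
    by force
  ultimately have f_bound: "norm (f t u v) \<le> M" if "t \<in> {0..T}" "u \<in> Q" "v \<in> G" for t u v
    unfolding M_def using that
      norm_le_Sup_norm_image[OF continuous_on_subset[OF f_cont], of "{0..T} \<times> Q \<times> G" "(t, u, v)"]
    by (simp add: bounded_Times)
  have "running_max_ivp f g x0 \<alpha> M LT La Tb I Q G"
  proof
    show "continuous_on ({0..Tb} \<times> Q \<times> G) (\<lambda>(t, u, v). f t u v)"
      using Tb_bound by (intro continuous_on_subset[OF f_cont]) auto
    show "norm (f t u v) \<le> M" if "t \<in> {0..Tb}" "u \<in> Q" "v \<in> G" for t u v
      using that Tb_bound by (intro f_bound) auto
    show "norm (f t u1 v1 - f t u2 v2) \<le> LT * (norm (u1 - u2) + norm (v1 - v2))"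
      if "t \<in> {0..Tb}" "u1 \<in> Q" "u2 \<in> Q" "v1 \<in> G" "v2 \<in> G" for t u1 u2 v1 v2
      using that Tb_bound by (intro f_lip) auto
    show "M * Tb \<le> \<alpha>"
      using Tb_bound M_pos by (simp add: field_simps)
    show "Tb * (LT * (1 + La * sqrt CARD('m))) < 1"
      using Tb_bound LT_pos La_pos by (simp add: field_simps add_pos_nonneg)
  qed (use I_def Q_def G_def g_lip Tb_pos M_pos LT_pos La_pos in \<open>fact | simp\<close>)+
  then show ?thesis
    unfolding running_max_def[symmetric] by (rule running_max_ivp.solution_exists)
qed

end
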